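(* Let $p$ be a projection in a C$^*$-algebra $A$. Then for every $g\in K_0(A)^+$, \[ s_g(p)=\begin{cases}1 & \text{if } [p]_0\not\leq g,\\ 0 & \text{if } [p]_0\leq g.\end{cases} \]
   Context: For a C$^*$-algebra $A$, $P(A)$ denotes the set of projections of $A$, $K_0(A)$ is the usual $K_0$-group with positive cone $K_0(A)^+=\{[p]_0 : p \text{ a projection in } M_n(A),\ n\geq1\}$, and $g\leq h$ means $h-g\in K_0(A)^+$. The singular value function of $a\in A$ is the function $s(a)\colon K_0(A)^+\to[0,\infty)$ defined by \[ s_g(a):=\inf\{\|a-ap\| \mid p\in P(A),\ [p]_0\leq g\},\qquad g\in K_0(A)^+. \] *)

theory Defs
  imports "HOL-Analysis.Analysis"
begin

text \<open>A (possibly non-unital) C*-algebra: a Banach algebra (type class, giving completeness,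
 associative multiplication without unit, submultiplicative norm) together with a complex
 scalar multiplication extending the real one and an involution satisfying the C*-identity.\<close>

definition cstar_algebra ::
  "('a::{banach,real_normed_algebra} \<Rightarrow> 'a) \<Rightarrow> (complex \<Rightarrow> 'a \<Rightarrow> 'a) \<Rightarrow> bool" where
  "cstar_algebra st sc \<longleftrightarrow>
     (\<forall>c x y. sc c (x + y) = sc c x + sc c y) \<and>
     (\<forall>c d x. sc (c + d) x = sc c x + sc d x) \<and>
     (\<forall>c d x. sc c (sc d x) = sc (c * d) x) \<and>
     (\<forall>x. sc 1 x = x) \<and>
     (\<forall>r x. sc (complex_of_real r) x = scaleR r x) \<and>
     (\<forall>c x y. sc c (x * y) = sc c x * y \<and> sc c (x * y) = x * sc c y) \<and>
     (\<forall>c x. norm (sc c x) = cmod c * norm x) \<and>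
     (\<forall>x y. st (x + y) = st x + st y) \<and>
     (\<forall>c x. st (sc c x) = sc (cnj c) (st x)) \<and>
     (\<forall>x y. st (x * y) = st y * st x) \<and>
     (\<forall>x. st (st x) = x) \<and>
     (\<forall>x. norm (st x * x) = (norm x)\<^sup>2)"

definition is_proj :: "('a::ring \<Rightarrow> 'a) \<Rightarrow> 'a \<Rightarrow> bool" where
  "is_proj st p \<longleftrightarrow> p * p = p \<and> st p = p"

text \<open>A matrix is a function nat => nat => 'b; it is an m x n matrix if it vanishes outside
 the index range {..<m} x {..<n}.\<close>

definition msupp :: "nat \<Rightarrow> nat \<Rightarrow> (nat \<Rightarrow> nat \<Rightarrow> 'b::zero) \<Rightarrow> bool" where
  "msupp m n x \<longleftrightarrow> (\<forall>i j. (m \<le> i \<or> n \<le> j) \<longrightarrow> x i j = 0)"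

definition mmul :: "('b \<Rightarrow> 'b \<Rightarrow> 'b) \<Rightarrow> nat \<Rightarrow> (nat \<Rightarrow> nat \<Rightarrow> 'b::comm_monoid_add)
    \<Rightarrow> (nat \<Rightarrow> nat \<Rightarrow> 'b) \<Rightarrow> nat \<Rightarrow> nat \<Rightarrow> 'b" where
  "mmul mul k x y = (\<lambda>i j. \<Sum>l<k. mul (x i l) (y l j))"

definition madj :: "('b \<Rightarrow> 'b) \<Rightarrow> (nat \<Rightarrow> nat \<Rightarrow> 'b) \<Rightarrow> nat \<Rightarrow> nat \<Rightarrow> 'b" where
  "madj st x = (\<lambda>i j. st (x j i))"

definition mproj :: "('b \<Rightarrow> 'b \<Rightarrow> 'b) \<Rightarrow> ('b \<Rightarrow> 'b) \<Rightarrow> nat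
    \<Rightarrow> (nat \<Rightarrow> nat \<Rightarrow> 'b::comm_monoid_add) \<Rightarrow> bool" where
  "mproj mul st n e \<longleftrightarrow> msupp n n e \<and> mmul mul n e e = e \<and> madj st e = e"

definition mvn :: "('b \<Rightarrow> 'b \<Rightarrow> 'b) \<Rightarrow> ('b \<Rightarrow> 'b) \<Rightarrow> nat \<Rightarrow> (nat \<Rightarrow> nat \<Rightarrow> 'b::comm_monoid_add)
    \<Rightarrow> nat \<Rightarrow> (nat \<Rightarrow> nat \<Rightarrow> 'b) \<Rightarrow> bool" where
  "mvn mul st m e n f \<longleftrightarrow>
     (\<exists>v. msupp n m v \<and> mmul mul n (madj st v) v = e \<and> mmul mul m v (madj st v) = f)"

definition dsum :: "nat \<Rightarrow> (nat \<Rightarrow> nat \<Rightarrow> 'b::zero) \<Rightarrow> nat \<Rightarrow> (nat \<Rightarrow> nat \<Rightarrow> 'b) \<Rightarrow> nat \<Rightarrow> nat \<Rightarrow> 'b" where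
  "dsum m x n y = (\<lambda>i j. if i < m \<and> j < m then x i j
                         else if m \<le> i \<and> m \<le> j \<and> i < m + n \<and> j < m + n then y (i - m) (j - m)
                         else 0)"

definition elem_mat :: "'b::zero \<Rightarrow> nat \<Rightarrow> nat \<Rightarrow> 'b" where
  "elem_mat a = (\<lambda>i j. if i = 0 \<and> j = 0 then a else 0)"

definition umul :: "(complex \<Rightarrow> 'a::ring \<Rightarrow> 'a) \<Rightarrow> 'a \<times> complex \<Rightarrow> 'a \<times> complex \<Rightarrow> 'a \<times> complex" where
  "umul sc x y = (fst x * fst y + sc (snd x) (fst y) + sc (snd y) (fst x), snd x * snd y)"

definition ustar :: "('a \<Rightarrow> 'a) \<Rightarrow> 'a \<times> complex \<Rightarrow> 'a \<times> complex" where
  "ustar st x = (st (fst x), cnj (snd x))"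

definition uemb :: "(nat \<Rightarrow> nat \<Rightarrow> 'a) \<Rightarrow> nat \<Rightarrow> nat \<Rightarrow> 'a \<times> complex" where
  "uemb x = (\<lambda>i j. (x i j, 0))"

text \<open>Elements of P_infinity(A) are pairs (n, e) with e a projection in M_n(A).
 K_0(A) is the kernel of K_0(A~) -> K_0(C), where K_0(A~) is the Grothendieck group of
 D(A~) = P_infinity(A~)/~_0.  For e, f in P_infinity(A):
 [e]_0 = [f]_0 in K_0(A~) iff there is s in P_infinity(A~) with diag(e,s) ~_0 diag(f,s).\<close>
definition K0_eq :: "('a::{banach,real_normed_algebra} \<Rightarrow> 'a) \<Rightarrow> (complex \<Rightarrow> 'a \<Rightarrow> 'a)
    \<Rightarrow> nat \<times> (nat \<Rightarrow> nat \<Rightarrow> 'a) \<Rightarrow> nat \<times> (nat \<Rightarrow> nat \<Rightarrow> 'a) \<Rightarrow> bool" where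
  "K0_eq st sc E F \<longleftrightarrow>
     (\<exists>k s. mproj (umul sc) (ustar st) k s \<and>
        mvn (umul sc) (ustar st)
          (fst E + k) (dsum (fst E) (uemb (snd E)) k s)
          (fst F + k) (dsum (fst F) (uemb (snd F)) k s))"

text \<open>[e]_0 <= [f]_0 iff [f]_0 - [e]_0 lies in K_0(A)^+ = {[r]_0 | r in P_infinity(A)},
 i.e. iff [f]_0 = [diag(e,r)]_0 for some r in P_infinity(A).\<close>
definition K0_le :: "('a::{banach,real_normed_algebra} \<Rightarrow> 'a) \<Rightarrow> (complex \<Rightarrow> 'a \<Rightarrow> 'a)
    \<Rightarrow> nat \<times> (nat \<Rightarrow> nat \<Rightarrow> 'a) \<Rightarrow> nat \<times> (nat \<Rightarrow> nat \<Rightarrow> 'a) \<Rightarrow> bool" where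
  "K0_le st sc E F \<longleftrightarrow>
     (\<exists>k r. mproj (*) st k r \<and> K0_eq st sc (fst E + k, dsum (fst E) (snd E) k r) F)"

text \<open>s_g(a) for g = [q]_0 in K_0(A)^+, q a projection in M_n(A).\<close>
definition sval :: "('a::{banach,real_normed_algebra} \<Rightarrow> 'a) \<Rightarrow> (complex \<Rightarrow> 'a \<Rightarrow> 'a)
    \<Rightarrow> nat \<times> (nat \<Rightarrow> nat \<Rightarrow> 'a) \<Rightarrow> 'a \<Rightarrow> real" where
  "sval st sc G a = Inf {norm (a - a * p) | p. is_proj st p \<and> K0_le st sc (1, elem_mat p) G}"

end

theory Submission
  imports Defs "HOL-Computational_Algebra.Formal_Power_Series"
begin

text \<open>If \<open>[p]\<^sub>0 \<le> g\<close>, then \<open>p\<close> itself is admissible and \<open>s\<^sub>g(p) = 0\<close>. Otherwise \<open>p \<noteq> 0\<close>,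
  since \<open>[0]\<^sub>0 \<le> g\<close>, and the projection \<open>0\<close> gives \<open>s\<^sub>g(p) \<le> \<parallel>p\<parallel> = 1\<close>. Conversely, let \<open>r\<close> be a
  projection with \<open>[r]\<^sub>0 \<le> g\<close> and \<open>\<parallel>p - pr\<parallel> < 1\<close>. Then \<open>prp\<close> is invertible in the corner \<open>pAp\<close>,
  and with its inverse square root \<open>b\<close> (a binomial series) the element \<open>w = rb\<close> is a partial
  isometry with \<open>w\<^sup>*w = p\<close> and \<open>ww\<^sup>* \<le> r\<close>. Hence \<open>diag(p, r - ww\<^sup>*)\<close> is Murray-von Neumann
  equivalent to \<open>r\<close>, so \<open>[p]\<^sub>0 \<le> [r]\<^sub>0 \<le> g\<close>, a contradiction. Thus \<open>s\<^sub>g(p) = 1\<close>.\<close>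

section \<open>Matrices over an involutive ring\<close>

locale star_ring =
  fixes mul :: "'b::ab_group_add \<Rightarrow> 'b \<Rightarrow> 'b" and star :: "'b \<Rightarrow> 'b"
  assumes mul_assoc: "mul (mul a b) c = mul a (mul b c)"
    and distrib_right: "mul (a + b) c = mul a c + mul b c"
    and distrib_left: "mul a (b + c) = mul a b + mul a c"
    and star_add: "star (a + b) = star a + star b"
    and star_mul: "star (mul a b) = mul (star b) (star a)"
    and star_star [simp]: "star (star a) = a"
begin

lemma mul_zero_left [simp]: "mul 0 a = 0"
  using distrib_right[of 0 0 a] by simp

lemma mul_zero_right [simp]: "mul a 0 = 0"
  using distrib_left[of a 0 0] by simp

lemma star_zero [simp]: "star 0 = 0"
  using star_add[of 0 0] by simp

lemma sum_mul: "mul (\<Sum>i\<in>I. f i) c = (\<Sum>i\<in>I. mul (f i) c)"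
  by (induction I rule: infinite_finite_induct) (auto simp: distrib_right)

lemma mul_sum: "mul c (\<Sum>i\<in>I. f i) = (\<Sum>i\<in>I. mul c (f i))"
  by (induction I rule: infinite_finite_induct) (auto simp: distrib_left)

lemma star_sum: "star (\<Sum>i\<in>I. f i) = (\<Sum>i\<in>I. star (f i))"
  by (induction I rule: infinite_finite_induct) (auto simp: star_add)

lemma mmul_assoc: "mmul mul k (mmul mul l x y) z = mmul mul l x (mmul mul k y z)"
proof (intro ext)
  fix i j
  have "mmul mul k (mmul mul l x y) z i j = (\<Sum>a<k. \<Sum>b<l. mul (mul (x i b) (y b a)) (z a j))"
    by (simp add: mmul_def sum_mul)
  also have "\<dots> = (\<Sum>b<l. \<Sum>a<k. mul (x i b) (mul (y b a) (z a j)))"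
    by (subst sum.swap) (simp add: mul_assoc)
  also have "\<dots> = mmul mul l x (mmul mul k y z) i j"
    by (simp add: mmul_def mul_sum)
  finally show "mmul mul k (mmul mul l x y) z i j = mmul mul l x (mmul mul k y z) i j" .
qed

lemma madj_mmul: "madj star (mmul mul k x y) = mmul mul k (madj star y) (madj star x)"
  by (simp add: madj_def mmul_def star_sum star_mul)

lemma msupp_mmul: "msupp a b x \<Longrightarrow> msupp b c y \<Longrightarrow> msupp a c (mmul mul k x y)"
  by (auto simp: msupp_def mmul_def)

lemma msupp_madj: "msupp a b x \<Longrightarrow> msupp b a (madj star x)"
  by (auto simp: msupp_def madj_def star_add)

end

lemma sum_lessThan_add: "(\<Sum>i<m + n. f i) = (\<Sum>i<m. f i) + (\<Sum>i<n. f (m + i))" for m n :: nat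
  by (induction n) (auto simp: add.assoc)

lemma nat_three_ranges:
  fixes i l m :: nat
  obtains "i < l" | a where "i = l + a" "a < m" | a where "i = l + m + a"
  by (metis add.assoc le_add_diff_inverse not_less)

lemma dsum_assoc: "dsum l x (m + n) (dsum m y n z) = dsum (l + m) (dsum l x m y) n z"
proof (intro ext)
  fix i j
  show "dsum l x (m + n) (dsum m y n z) i j = dsum (l + m) (dsum l x m y) n z i j"
    by (rule nat_three_ranges[where i = i and l = l and m = m];
        rule nat_three_ranges[where i = j and l = l and m = m])
      (simp_all add: dsum_def)
qed

lemma dsum_0_left: "msupp n n y \<Longrightarrow> dsum 0 x n y = y"
  by (auto simp: dsum_def msupp_def fun_eq_iff)

lemma dsum_0_right: "msupp m m x \<Longrightarrow> dsum m x 0 y = x"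
  by (auto simp: dsum_def msupp_def fun_eq_iff)

definition block_diag ::
    "nat \<Rightarrow> nat \<Rightarrow> (nat \<Rightarrow> nat \<Rightarrow> 'c::zero) \<Rightarrow> nat \<Rightarrow> nat \<Rightarrow> (nat \<Rightarrow> nat \<Rightarrow> 'c) \<Rightarrow> nat \<Rightarrow> nat \<Rightarrow> 'c" where
  "block_diag m n x m' n' y =
     (\<lambda>i j. if i < m \<and> j < n then x i j else if m \<le> i \<and> n \<le> j then y (i - m) (j - n) else 0)"

lemma dsum_eq_block_diag: "msupp n n y \<Longrightarrow> dsum m x n y = block_diag m m x n n y"
  by (auto simp: dsum_def block_diag_def msupp_def fun_eq_iff)

context star_ring
begin

lemma madj_block_diag: "madj star (block_diag m n x m' n' y) = block_diag n m (madj star x) n' m' (madj star y)"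
  by (auto simp: madj_def block_diag_def fun_eq_iff)

lemma mmul_block_diag:
  "mmul mul (l + l') (block_diag m l x m' l' y) (block_diag l n u l' n' v)
     = block_diag m n (mmul mul l x u) m' n' (mmul mul l' y v)"
  unfolding mmul_def sum_lessThan_add by (auto simp: block_diag_def fun_eq_iff)

lemma mvn_dsum:
  assumes "mvn mul star m e n f" and "mvn mul star m' e' n' f'"
  shows "mvn mul star (m + m') (dsum m e m' e') (n + n') (dsum n f n' f')"
proof -
  obtain v where v: "msupp n m v" "mmul mul n (madj star v) v = e" "mmul mul m v (madj star v) = f"
    using assms(1) unfolding mvn_def by blast
  obtain v' where v': "msupp n' m' v'" "mmul mul n' (madj star v') v' = e'" "mmul mul m' v' (madj star v') = f'"
    using assms(2) unfolding mvn_def by blast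
  have "msupp m' m' e'" "msupp n' n' f'"
    using v' by (auto intro: msupp_mmul msupp_madj)
  moreover have "msupp (n + n') (m + m') (block_diag n m v n' m' v')"
    using v(1) v'(1) by (auto simp: msupp_def block_diag_def)
  ultimately show ?thesis
    unfolding mvn_def using v v'
    by (intro exI[of _ "block_diag n m v n' m' v'"]) (simp add: madj_block_diag mmul_block_diag dsum_eq_block_diag)
qed

lemma mproj_dsum:
  assumes "mproj mul star m x" and "mproj mul star n y"
  shows "mproj mul star (m + n) (dsum m x n y)"
proof -
  have "msupp m m x" "msupp n n y"
    using assms by (simp_all add: mproj_def)
  moreover have "msupp (m + n) (m + n) (dsum m x n y)"
    by (auto simp: msupp_def dsum_def)
  ultimately show ?thesis
    using assms by (simp add: mproj_def dsum_eq_block_diag mmul_block_diag madj_block_diag)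
qed

lemma mvn_refl: "mproj mul star n e \<Longrightarrow> mvn mul star n e n e"
  unfolding mproj_def mvn_def by auto

lemma mvn_trans:
  assumes e: "mproj mul star l e" and g: "mproj mul star n g"
    and ef: "mvn mul star l e m f" and fg: "mvn mul star m f n g"
  shows "mvn mul star l e n g"
proof -
  obtain v where v: "msupp m l v" "mmul mul m (madj star v) v = e" "mmul mul l v (madj star v) = f"
    using ef unfolding mvn_def by blast
  obtain u where u: "msupp n m u" "mmul mul n (madj star u) u = f" "mmul mul m u (madj star u) = g"
    using fg unfolding mvn_def by blast
  define t where "t = mmul mul m u v"
  have "mmul mul n (madj star t) t = mmul mul m (madj star v) (mmul mul m (mmul mul n (madj star u) u) v)"
    by (simp add: t_def madj_mmul mmul_assoc)
  also have "\<dots> = mmul mul m (madj star v) (mmul mul m (mmul mul l v (madj star v)) v)"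
    by (simp add: u(2) v(3))
  also have "\<dots> = mmul mul l (mmul mul m (madj star v) v) (mmul mul m (madj star v) v)"
    by (simp add: mmul_assoc)
  also have "\<dots> = mmul mul l e e"
    by (simp add: v(2))
  also have "\<dots> = e"
    using e by (simp add: mproj_def)
  finally have adj_t_t: "mmul mul n (madj star t) t = e" .
  have "mmul mul l t (madj star t) = mmul mul m u (mmul mul m (mmul mul l v (madj star v)) (madj star u))"
    by (simp add: t_def madj_mmul mmul_assoc)
  also have "\<dots> = mmul mul m u (mmul mul m (mmul mul n (madj star u) u) (madj star u))"
    by (simp add: u(2) v(3))
  also have "\<dots> = mmul mul n (mmul mul m u (madj star u)) (mmul mul m u (madj star u))"
    by (simp add: mmul_assoc)
  also have "\<dots> = mmul mul n g g"
    by (simp add: u(3))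
  also have "\<dots> = g"
    using g by (simp add: mproj_def)
  finally have "mmul mul l t (madj star t) = g" .
  moreover have "msupp n l t"
    unfolding t_def using u(1) v(1) by (rule msupp_mmul)
  ultimately show ?thesis
    unfolding mvn_def using adj_t_t by blast
qed

end

section \<open>Inverse square roots in a corner of a Banach algebra\<close>

definition inv_sqrt_coeff :: "nat \<Rightarrow> real" where
  "inv_sqrt_coeff n = (-1) ^ n * ((-1/2) gchoose n)"

lemma abs_inv_sqrt_coeff_le_1: "\<bar>inv_sqrt_coeff n\<bar> \<le> 1"
proof -
  have "\<bar>\<Prod>i = 0..<n. (-1/2::real) - of_nat i\<bar> \<le> fact n"
  proof (induction n)
    case (Suc n)
    have "\<bar>\<Prod>i = 0..<Suc n. (-1/2::real) - of_nat i\<bar>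
        = \<bar>\<Prod>i = 0..<n. (-1/2::real) - of_nat i\<bar> * (1/2 + of_nat n)"
      by (simp add: prod.atLeast0_lessThan_Suc abs_mult)
    also have "\<dots> \<le> fact n * (of_nat n + 1)"
      by (rule mult_mono) (use Suc in auto)
    finally show ?case
      by (simp add: algebra_simps)
  qed simp
  then show ?thesis
    by (simp add: inv_sqrt_coeff_def abs_mult flip: gbinomial_mult_fact)
qed

text \<open>Vandermonde's identity: the square of the series of \<open>(1 - t) powr (-1/2)\<close> is \<open>\<Sum>n. t ^ n\<close>.\<close>

lemma inv_sqrt_coeff_convolution: "(\<Sum>i\<le>n. inv_sqrt_coeff i * inv_sqrt_coeff (n - i)) = 1"
proof -
  have "(\<Sum>i\<le>n. inv_sqrt_coeff i * inv_sqrt_coeff (n - i))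
      = (-1) ^ n * (\<Sum>i\<le>n. ((-1/2::real) gchoose i) * ((-1/2) gchoose (n - i)))"
    unfolding sum_distrib_left
    by (intro sum.cong refl) (auto simp: inv_sqrt_coeff_def algebra_simps simp flip: power_add)
  also have "\<dots> = (-1) ^ n * ((-1::real) gchoose n)"
    using gbinomial_Vandermonde[of "-1/2::real" "-1/2" n] by (simp add: atLeast0AtMost)
  also have "(-1::real) gchoose n = (-1) ^ n"
    using gbinomial_negated_upper[of "-1::real" n] by (simp add: binomial_gbinomial[of n n, symmetric])
  finally show ?thesis
    by (simp flip: power_add)
qed

text \<open>\<open>x\<^sup>n\<close> computed in the corner algebra \<open>eAe\<close>, whose unit \<open>e\<close> stands in for the unit
  that the ambient algebra may lack.\<close>

primrec corner_pow :: "'a::times \<Rightarrow> 'a \<Rightarrow> nat \<Rightarrow> 'a" where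
  "corner_pow e x 0 = e"
| "corner_pow e x (Suc n) = x * corner_pow e x n"

definition corner_inv_sqrt :: "'a::real_normed_algebra \<Rightarrow> 'a \<Rightarrow> 'a" where
  "corner_inv_sqrt e x = (\<Sum>n. inv_sqrt_coeff n *\<^sub>R corner_pow e x n)"

lemma corner_pow_add:
  fixes e x :: "'a::semigroup_mult"
  assumes "e * e = e" and "e * x = x"
  shows "corner_pow e x m * corner_pow e x n = corner_pow e x (m + n)"
proof -
  have "e * corner_pow e x n = corner_pow e x n"
    using assms by (induction n) (simp_all flip: mult.assoc)
  then show ?thesis
    by (induction m) (simp_all add: mult.assoc)
qed

lemma corner_pow_mult_right:
  fixes e x :: "'a::semigroup_mult"
  assumes "e * e = e" and "e * x = x" and "x * e = x"
  shows "corner_pow e x n * x = corner_pow e x (Suc n)"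
  using corner_pow_add[OF assms(1,2), of n 1] assms(3) by simp

lemma norm_corner_pow_le:
  fixes e x :: "'a::real_normed_algebra"
  shows "norm (corner_pow e x n) \<le> norm e * norm x ^ n"
proof (induction n)
  case (Suc n)
  have "norm (corner_pow e x (Suc n)) \<le> norm x * norm (corner_pow e x n)"
    by (simp add: norm_mult_ineq)
  also have "\<dots> \<le> norm x * (norm e * norm x ^ n)"
    by (rule mult_left_mono[OF Suc]) simp
  finally show ?case
    by (simp add: ac_simps)
qed simp

lemma summable_norm_corner_inv_sqrt:
  fixes e x :: "'a::real_normed_algebra"
  assumes "norm x < 1"
  shows "summable (\<lambda>n. norm (inv_sqrt_coeff n *\<^sub>R corner_pow e x n))"
proof (rule summable_comparison_test)
  show "summable (\<lambda>n. norm e * norm x ^ n)"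
    using assms by (simp add: summable_geometric)
  have "\<bar>inv_sqrt_coeff n\<bar> * norm (corner_pow e x n) \<le> 1 * (norm e * norm x ^ n)" for n
    by (intro mult_mono abs_inv_sqrt_coeff_le_1 norm_corner_pow_le) auto
  then show "\<exists>N. \<forall>n\<ge>N. norm (norm (inv_sqrt_coeff n *\<^sub>R corner_pow e x n)) \<le> norm e * norm x ^ n"
    by simp
qed

lemma corner_inv_sqrt_sums:
  fixes e x :: "'a::{banach,real_normed_algebra}"
  assumes "norm x < 1"
  shows "(\<lambda>n. inv_sqrt_coeff n *\<^sub>R corner_pow e x n) sums corner_inv_sqrt e x"
  unfolding corner_inv_sqrt_def
  using summable_norm_cancel[OF summable_norm_corner_inv_sqrt[OF assms]] by (rule summable_sums)

lemma corner_inv_sqrt_linear_eq: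
  fixes e x :: "'a::{banach,real_normed_algebra}"
  assumes "norm x < 1" and "bounded_linear T" and "bounded_linear U"
    and "\<And>n. T (corner_pow e x n) = U (corner_pow e x n)"
  shows "T (corner_inv_sqrt e x) = U (corner_inv_sqrt e x)"
proof -
  have "(\<lambda>n. T (inv_sqrt_coeff n *\<^sub>R corner_pow e x n)) sums T (corner_inv_sqrt e x)"
    using assms(2) corner_inv_sqrt_sums[OF assms(1)] by (rule bounded_linear.sums)
  moreover have "(\<lambda>n. U (inv_sqrt_coeff n *\<^sub>R corner_pow e x n)) sums U (corner_inv_sqrt e x)"
    using assms(3) corner_inv_sqrt_sums[OF assms(1)] by (rule bounded_linear.sums)
  ultimately show ?thesis
    using assms(2,3,4) by (simp add: linear_simps sums_unique2)
qed

lemma corner_inv_sqrt_square: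
  fixes e x :: "'a::{banach,real_normed_algebra}"
  assumes "e * e = e" and "e * x = x" and "x * e = x" and "norm x < 1"
  shows "corner_inv_sqrt e x * corner_inv_sqrt e x * (e - x) = e"
proof -
  let ?X = "corner_pow e x"
  have "(\<lambda>n. \<Sum>i\<le>n. (inv_sqrt_coeff i *\<^sub>R ?X i) * (inv_sqrt_coeff (n - i) *\<^sub>R ?X (n - i)))
      sums (corner_inv_sqrt e x * corner_inv_sqrt e x)"
    unfolding corner_inv_sqrt_def
    using summable_norm_corner_inv_sqrt[OF assms(4)] by (intro Cauchy_product_sums)
  moreover have "(\<Sum>i\<le>n. (inv_sqrt_coeff i *\<^sub>R ?X i) * (inv_sqrt_coeff (n - i) *\<^sub>R ?X (n - i))) = ?X n" for n
    using inv_sqrt_coeff_convolution[of n]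
    by (simp add: corner_pow_add[OF assms(1,2)] flip: scaleR_sum_left) (simp add: ac_simps)
  ultimately have "?X sums (corner_inv_sqrt e x * corner_inv_sqrt e x)"
    by simp
  then have "(\<lambda>n. ?X n * (e - x)) sums (corner_inv_sqrt e x * corner_inv_sqrt e x * (e - x))"
    by (rule sums_mult2)
  moreover have "(\<lambda>n. ?X n - ?X (Suc n)) sums e"
  proof -
    have "(\<lambda>n. norm e * norm x ^ n) \<longlonglongrightarrow> 0"
      using assms(4) by (intro tendsto_mult_right_zero LIMSEQ_power_zero) simp
    then have "?X \<longlonglongrightarrow> 0"
      by (rule Lim_null_comparison[rotated]) (simp add: norm_corner_pow_le)
    then show ?thesis
      using telescope_sums'[of ?X 0] by simp
  qed
  moreover have "?X n * (e - x) = ?X n - ?X (Suc n)" for n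
    using corner_pow_add[OF assms(1,2), of n 0] corner_pow_mult_right[OF assms(1-3), of n]
    by (simp add: right_diff_distrib)
  ultimately show ?thesis
    by (simp add: sums_unique2)
qed

section \<open>Projections in a C*-algebra\<close>

locale cstar =
  fixes st :: "'a::{banach,real_normed_algebra} \<Rightarrow> 'a" and sc :: "complex \<Rightarrow> 'a \<Rightarrow> 'a"
  assumes cstar_algebra: "cstar_algebra st sc"
begin

lemma sc_add_right: "sc c (x + y) = sc c x + sc c y"
  using cstar_algebra by (simp add: cstar_algebra_def)

lemma sc_add_left: "sc (c + d) x = sc c x + sc d x"
  using cstar_algebra by (simp add: cstar_algebra_def)

lemma sc_sc: "sc c (sc d x) = sc (c * d) x"
  using cstar_algebra by (simp add: cstar_algebra_def)

lemma sc_of_real: "sc (complex_of_real r) x = r *\<^sub>R x"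
  using cstar_algebra by (simp add: cstar_algebra_def)

lemma sc_zero [simp]: "sc 0 x = 0"
  using sc_of_real[of 0 x] by simp

lemma sc_mult_left: "sc c x * y = sc c (x * y)"
  using cstar_algebra by (simp add: cstar_algebra_def)

lemma sc_mult_right: "x * sc c y = sc c (x * y)"
  using cstar_algebra unfolding cstar_algebra_def by metis

lemma st_add: "st (x + y) = st x + st y"
  using cstar_algebra by (simp add: cstar_algebra_def)

lemma st_sc: "st (sc c x) = sc (cnj c) (st x)"
  using cstar_algebra by (simp add: cstar_algebra_def)

lemma st_mult: "st (x * y) = st y * st x"
  using cstar_algebra by (simp add: cstar_algebra_def)

lemma st_st [simp]: "st (st x) = x"
  using cstar_algebra by (simp add: cstar_algebra_def)

lemma norm_st_mult_self: "norm (st x * x) = (norm x)\<^sup>2"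
  using cstar_algebra by (simp add: cstar_algebra_def)

lemma st_zero [simp]: "st 0 = 0"
  using st_add[of 0 0] by simp

lemma st_diff: "st (x - y) = st x - st y"
  using st_add[of "x - y" y] by simp

lemma st_scaleR: "st (r *\<^sub>R x) = r *\<^sub>R st x"
  using st_sc[of "complex_of_real r" x] by (simp add: sc_of_real)

lemma norm_st [simp]: "norm (st x) = norm x"
proof -
  have "norm x \<le> norm (st x)" for x
  proof (cases "x = 0")
    case False
    have "norm x * norm x \<le> norm (st x) * norm x"
      using norm_st_mult_self[of x] norm_mult_ineq[of "st x" x] by (simp add: power2_eq_square)
    then show ?thesis
      using False by simp
  qed simp
  from this[of x] this[of "st x"] show ?thesis
    by simp
qed

lemma norm_mult_st_self: "norm (x * st x) = (norm x)\<^sup>2"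
  using norm_st_mult_self[of "st x"] by simp

lemma bounded_linear_st: "bounded_linear st"
  by (rule bounded_linear_intro[of _ 1]) (simp_all add: st_add st_scaleR)

lemma norm_proj: "is_proj st p \<Longrightarrow> p \<noteq> 0 \<Longrightarrow> norm p = 1"
  using norm_st_mult_self[of p] by (simp add: is_proj_def power2_eq_square)

lemma partial_isometry_of_norm_less_1:
  assumes p: "is_proj st p" and r: "is_proj st r" and less_1: "norm (p - p * r) < 1"
  obtains w where "st w * w = p" and "r * w = w" and "w * p = w"
proof -
  have pp: "p * p = p" "st p = p" and rr: "r * r = r" "st r = r"
    using p r by (simp_all add: is_proj_def)
  have ppz: "p * (p * z) = p * z" and rrz: "r * (r * z) = r * z" for z
    by (simp_all add: pp rr flip: mult.assoc)
  define x where "x = (p - p * r) * st (p - p * r)"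
  have x_eq: "x = p - p * r * p"
    by (simp add: x_def st_diff st_mult pp rr algebra_simps)
       (simp add: mult.assoc ppz rrz)
  have px: "p * x = x" and xp: "x * p = x" and stx: "st x = x"
    by (simp_all add: x_eq algebra_simps st_diff st_mult pp rr mult.assoc ppz)
  have norm_x: "norm x < 1"
    using less_1 by (simp add: x_def norm_mult_st_self abs_square_less_1)
  define b where "b = corner_inv_sqrt p x"
  have b_eq: "T b = U b" if "bounded_linear T" "bounded_linear U"
    "\<And>n. T (corner_pow p x n) = U (corner_pow p x n)" for T U
    unfolding b_def using norm_x that by (rule corner_inv_sqrt_linear_eq)
  have pb: "p * b = b"
    using b_eq[of "(*) p" "\<lambda>y. y"] corner_pow_add[OF pp(1) px, of 0]
    by (simp add: bounded_linear_mult_right bounded_linear_ident)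
  have bp: "b * p = b"
    using b_eq[of "\<lambda>y. y * p" "\<lambda>y. y"] corner_pow_add[OF pp(1) px, of _ 0]
    by (simp add: bounded_linear_mult_left bounded_linear_ident)
  have xb: "x * b = b * x"
    using b_eq[of "(*) x" "\<lambda>y. y * x"] corner_pow_mult_right[OF pp(1) px xp]
    by (simp add: bounded_linear_mult_right bounded_linear_mult_left)
  have "st (corner_pow p x n) = corner_pow p x n" for n
    by (induction n) (simp_all add: pp st_mult stx corner_pow_mult_right[OF pp(1) px xp])
  then have stb: "st b = b"
    using b_eq[of st "\<lambda>y. y"] by (simp add: bounded_linear_st bounded_linear_ident)
  define w where "w = r * b"
  have "st w * w = b * r * b"
    by (simp add: w_def st_mult stb rr rrz mult.assoc)
  also have "\<dots> = b * (p * r * p) * b"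
    by (metis bp pb mult.assoc)
  also have "\<dots> = b * (p - x) * b"
    by (simp add: x_eq)
  also have "\<dots> = b * b * (p - x)"
    using xb pb bp by (simp add: algebra_simps)
  also have "\<dots> = p"
    unfolding b_def using pp(1) px xp norm_x by (rule corner_inv_sqrt_square)
  finally show ?thesis
    using that[of w] by (simp add: w_def rrz bp mult.assoc)
qed

lemma is_proj_diff_range:
  assumes r: "is_proj st r" and w: "st w * w = p" "r * w = w" "w * p = w"
  shows "is_proj st (r - w * st w)"
proof -
  have rr: "r * r = r" "st r = r"
    using r by (simp_all add: is_proj_def)
  have wr: "st w * r = st w"
    using arg_cong[OF w(2), of st] by (simp add: st_mult rr)
  have ff: "w * (st w * (w * st w)) = w * st w"
    by (simp add: w(1) w(3) flip: mult.assoc)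
  have rf: "r * (w * st w) = w * st w"
    by (simp add: w(2) flip: mult.assoc)
  show ?thesis
    using wr ff rf by (simp add: is_proj_def algebra_simps st_diff st_mult rr)
qed

lemma mvn_dsum_diff_range:
  assumes p: "is_proj st p" and r: "is_proj st r" and w: "st w * w = p" "r * w = w" "w * p = w"
  shows "mvn (*) st 2 (dsum 1 (elem_mat p) 1 (elem_mat (r - w * st w))) 1 (elem_mat r)"
proof -
  define q where "q = r - w * st w"
  have q: "q * q = q" "st q = q"
    using is_proj_diff_range[OF r w] by (simp_all add: q_def is_proj_def)
  have rr: "r * r = r" "st r = r"
    using r by (simp_all add: is_proj_def)
  have "st w * r = st w"
    using arg_cong[OF w(2), of st] by (simp add: st_mult rr)
  moreover have "st w * (w * st w) = st w"
    using arg_cong[OF w(3), of st] by (simp add: w(1) st_mult p[unfolded is_proj_def] flip: mult.assoc)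
  ultimately have wq: "st w * q = 0"
    by (simp add: q_def right_diff_distrib)
  have qw: "q * w = 0"
    by (simp add: q_def left_diff_distrib w(2) mult.assoc w(1) w(3))
  define V :: "nat \<Rightarrow> nat \<Rightarrow> 'a" where
    "V = (\<lambda>i j. if i = 0 \<and> j = 0 then w else if i = 0 \<and> j = 1 then q else 0)"
  have "msupp 1 2 V"
    by (simp add: msupp_def V_def)
  moreover have "mmul (*) 1 (madj st V) V = dsum 1 (elem_mat p) 1 (elem_mat q)"
    using w(1) wq qw q by (auto simp: mmul_def madj_def V_def dsum_def elem_mat_def fun_eq_iff)
  moreover have "mmul (*) 2 V (madj st V) = elem_mat r"
    using q by (auto simp: mmul_def madj_def V_def elem_mat_def fun_eq_iff numeral_2_eq_2 q_def)
  ultimately show ?thesis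
    unfolding mvn_def q_def by blast
qed

end

section \<open>The unitization and the order on \<open>K\<^sub>0\<close>\<close>

context cstar
begin

lemma umul_assoc: "umul sc (umul sc a b) c = umul sc a (umul sc b c)"
  by (simp add: umul_def algebra_simps sc_add_right sc_add_left sc_sc sc_mult_left sc_mult_right)

lemma umul_distrib_right: "umul sc (a + b) c = umul sc a c + umul sc b c"
  by (simp add: umul_def algebra_simps sc_add_right sc_add_left)

lemma umul_distrib_left: "umul sc a (b + c) = umul sc a b + umul sc a c"
  by (simp add: umul_def algebra_simps sc_add_right sc_add_left)

lemma ustar_add: "ustar st (a + b) = ustar st a + ustar st b"
  by (simp add: ustar_def st_add)

lemma ustar_umul: "ustar st (umul sc a b) = umul sc (ustar st b) (ustar st a)"
  by (simp add: ustar_def umul_def st_add st_mult st_sc algebra_simps)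

end

sublocale cstar \<subseteq> A: star_ring "(*)" st
  by unfold_locales (simp_all add: algebra_simps st_add st_mult)

sublocale cstar \<subseteq> U: star_ring "umul sc" "ustar st"
  by unfold_locales (simp_all add: umul_assoc umul_distrib_right umul_distrib_left ustar_add ustar_umul,
      simp add: ustar_def)

context cstar
begin

lemma uemb_mmul: "mmul (umul sc) k (uemb x) (uemb y) = uemb (mmul (*) k x y)"
proof -
  have "(\<Sum>l\<in>L. (f l, 0::complex)) = (sum f L, 0)" for f :: "nat \<Rightarrow> 'a" and L
    by (simp add: prod_eq_iff fst_sum snd_sum)
  then show ?thesis
    by (simp add: mmul_def uemb_def umul_def fun_eq_iff)
qed

lemma madj_uemb: "madj (ustar st) (uemb x) = uemb (madj st x)"
  by (simp add: madj_def uemb_def ustar_def fun_eq_iff)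

lemma msupp_uemb: "msupp m n x \<Longrightarrow> msupp m n (uemb x)"
  by (simp add: msupp_def uemb_def zero_prod_def)

lemma mproj_uemb: "mproj (*) st n x \<Longrightarrow> mproj (umul sc) (ustar st) n (uemb x)"
  by (simp add: mproj_def msupp_uemb uemb_mmul madj_uemb)

lemma mvn_uemb: "mvn (*) st m e n f \<Longrightarrow> mvn (umul sc) (ustar st) m (uemb e) n (uemb f)"
  unfolding mvn_def by (metis msupp_uemb uemb_mmul madj_uemb)

lemma mproj_elem_mat: "is_proj st a \<Longrightarrow> mproj (*) st 1 (elem_mat a)"
  by (auto simp: is_proj_def mproj_def msupp_def mmul_def madj_def elem_mat_def fun_eq_iff)

lemma K0_le_refl:
  assumes q: "mproj (*) st n q"
  shows "K0_le st sc (n, q) (n, q)"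
proof -
  have "msupp n n q"
    using q by (simp add: mproj_def)
  moreover have "mvn (umul sc) (ustar st) n (uemb q) n (uemb q)"
    using q by (intro U.mvn_refl mproj_uemb)
  moreover have "mproj (umul sc) (ustar st) 0 (\<lambda>_ _. 0)"
    by (simp add: mproj_def msupp_def mmul_def madj_def ustar_def zero_prod_def)
  ultimately have "K0_eq st sc (n + 0, dsum n q 0 (\<lambda>_ _. 0)) (n, q)"
    unfolding K0_eq_def by (intro exI[of _ 0] exI[of _ "\<lambda>_ _. 0"]) (simp add: dsum_0_right msupp_uemb)
  moreover have "mproj (*) st 0 (\<lambda>_ _. 0)"
    by (simp add: mproj_def msupp_def mmul_def madj_def)
  ultimately show ?thesis
    unfolding K0_le_def by (auto intro!: exI[of _ 0] exI[of _ "\<lambda>_ _. 0"])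
qed

lemma K0_le_of_mvn_dsum:
  assumes e: "mproj (*) st l e" and h: "mproj (*) st m h"
    and ehf: "mvn (*) st (l + m) (dsum l e m h) n f"
    and le: "K0_le st sc (n, f) (N, q)" and q: "mproj (*) st N q"
  shows "K0_le st sc (l, e) (N, q)"
proof -
  obtain k r where r: "mproj (*) st k r" and "K0_eq st sc (n + k, dsum n f k r) (N, q)"
    using le unfolding K0_le_def by auto
  then obtain k' s where s: "mproj (umul sc) (ustar st) k' s"
    and fq: "mvn (umul sc) (ustar st) (n + k + k') (dsum (n + k) (uemb (dsum n f k r)) k' s)
               (N + k') (dsum N (uemb q) k' s)"
    unfolding K0_eq_def by auto
  let ?e = "dsum l e (m + k) (dsum m h k r)"
  have "mvn (umul sc) (ustar st) (l + (m + k) + k') (dsum (l + (m + k)) (uemb ?e) k' s)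
          (n + k + k') (dsum (n + k) (uemb (dsum n f k r)) k' s)"
    using U.mvn_dsum[OF mvn_uemb[OF A.mvn_dsum[OF ehf A.mvn_refl[OF r]]] U.mvn_refl[OF s]]
    by (simp add: dsum_assoc add.assoc)
  moreover have "mproj (*) st (m + k) (dsum m h k r)"
    using h r by (rule A.mproj_dsum)
  moreover have "mproj (umul sc) (ustar st) (l + (m + k) + k') (dsum (l + (m + k)) (uemb ?e) k' s)"
    by (intro U.mproj_dsum mproj_uemb A.mproj_dsum e h r s)
  moreover have "mproj (umul sc) (ustar st) (N + k') (dsum N (uemb q) k' s)"
    by (intro U.mproj_dsum mproj_uemb q s)
  ultimately show ?thesis
    using U.mvn_trans[OF _ _ _ fq] s unfolding K0_le_def K0_eq_def by fastforce
qed

lemma K0_le_zero: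
  assumes q: "mproj (*) st n q"
  shows "K0_le st sc (1, elem_mat 0) (n, q)"
proof -
  have "mvn (*) st 1 (elem_mat 0) 0 (\<lambda>_ _. 0)"
    unfolding mvn_def by (intro exI[of _ "\<lambda>_ _. 0"]) (simp add: msupp_def mmul_def elem_mat_def fun_eq_iff)
  from A.mvn_dsum[OF this A.mvn_refl[OF q]]
  have "mvn (*) st (1 + n) (dsum 1 (elem_mat 0) n q) (0 + n) (dsum 0 (\<lambda>_ _. 0) n q)" .
  moreover have "dsum 0 (\<lambda>_ _. 0) n q = q"
    using q by (simp add: mproj_def dsum_0_left)
  ultimately have "mvn (*) st (1 + n) (dsum 1 (elem_mat 0) n q) n q"
    by simp
  moreover have "mproj (*) st 1 (elem_mat 0)"
    by (rule mproj_elem_mat) (simp add: is_proj_def)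
  ultimately show ?thesis
    using K0_le_of_mvn_dsum[OF _ q _ K0_le_refl[OF q] q] by blast
qed

lemma K0_le_of_partial_isometry:
  assumes p: "is_proj st p" and r: "is_proj st r" and w: "st w * w = p" "r * w = w" "w * p = w"
    and le: "K0_le st sc (1, elem_mat r) (n, q)" and q: "mproj (*) st n q"
  shows "K0_le st sc (1, elem_mat p) (n, q)"
proof -
  have "mvn (*) st (1 + 1) (dsum 1 (elem_mat p) 1 (elem_mat (r - w * st w))) 1 (elem_mat r)"
    unfolding one_add_one by (rule mvn_dsum_diff_range[OF p r w])
  then show ?thesis
    by (rule K0_le_of_mvn_dsum[OF mproj_elem_mat[OF p] mproj_elem_mat[OF is_proj_diff_range[OF r w]] _ le q])
qed

lemma one_le_norm_diff_if_not_K0_le: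
  assumes p: "is_proj st p" and r: "is_proj st r"
    and le: "K0_le st sc (1, elem_mat r) (n, q)" and not_K0_le: "\<not> K0_le st sc (1, elem_mat p) (n, q)"
    and q: "mproj (*) st n q"
  shows "1 \<le> norm (p - p * r)"
proof (rule ccontr)
  assume "\<not> 1 \<le> norm (p - p * r)"
  then have "norm (p - p * r) < 1"
    by simp
  then obtain w where w: "st w * w = p" "r * w = w" "w * p = w"
    by (rule partial_isometry_of_norm_less_1[OF p r])
  from not_K0_le K0_le_of_partial_isometry[OF p r w le q] show False ..
qed


lemma sval_eq_0_if_K0_le:
  assumes p: "is_proj st p" and "K0_le st sc (1, elem_mat p) G"
  shows "sval st sc G p = 0"
proof -
  let ?S = "{norm (p - p * r) | r. is_proj st r \<and> K0_le st sc (1, elem_mat r) G}"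
  have "norm (p - p * p) \<in> ?S"
    using assms by blast
  then have "0 \<in> ?S"
    using p by (simp add: is_proj_def)
  then show ?thesis
    unfolding sval_def by (rule cInf_eq_minimum) auto
qed

lemma sval_eq_1_if_not_K0_le:
  assumes p: "is_proj st p" and q: "mproj (*) st n q"
    and not_K0_le: "\<not> K0_le st sc (1, elem_mat p) (n, q)"
  shows "sval st sc (n, q) p = 1"
proof -
  let ?S = "{norm (p - p * r) | r. is_proj st r \<and> K0_le st sc (1, elem_mat r) (n, q)}"
  have zero_le: "K0_le st sc (1, elem_mat 0) (n, q)"
    using q by (rule K0_le_zero)
  moreover have "is_proj st 0"
    by (simp add: is_proj_def)
  ultimately have "norm (p - p * 0) \<in> ?S"
    by blast
  moreover have "p \<noteq> 0"
    using not_K0_le zero_le by blast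
  ultimately have "1 \<in> ?S"
    using norm_proj[OF p] by simp
  moreover have "1 \<le> y" if "y \<in> ?S" for y
    using that one_le_norm_diff_if_not_K0_le[OF p _ _ not_K0_le q] by blast
  ultimately show ?thesis
    unfolding sval_def by (rule cInf_eq_minimum)
qed

end

theorem lemma3p6:
  fixes st :: "'a::{banach,real_normed_algebra} \<Rightarrow> 'a"
    and sc :: "complex \<Rightarrow> 'a \<Rightarrow> 'a"
    and p :: 'a and n :: nat and q :: "nat \<Rightarrow> nat \<Rightarrow> 'a"
  assumes "cstar_algebra st sc"
    and "is_proj st p"
    and "mproj (*) st n q"
  shows "sval st sc (n, q) p =
           (if K0_le st sc (1, elem_mat p) (n, q) then 0 else 1)"
proof -
  interpret cstar st sc
    by unfold_locales fact
  show ?thesis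
    using sval_eq_0_if_K0_le[OF assms(2)] sval_eq_1_if_not_K0_le[OF assms(2,3)] by simp
qed

end
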